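(* Let $n\geq 2$ be an integer and $k\in\{1,\ldots,n-1\}$. Let $a_1,\ldots,a_n$ and $b_1,\ldots,b_{n-k}$ be positive real numbers such that $\max_{1\leq i\leq n}a_i\leq \min_{1\leq j\leq n-k}b_j$ and $\sum_{i=1}^{n}a_i=\sum_{j=1}^{n-k}b_j$. Then $$\sum_{i=1}^{n}a_i^2<\sum_{j=1}^{n-k}b_j^2.$$ *)

theory Defs
  imports Complex_Main
begin

end

theory Submission
  imports Defs
begin

text \<open>With \<open>c\<close> any number between \<open>max a\<^sub>i\<close> and \<open>min b\<^sub>j\<close> and \<open>S\<close> the common sum,
  \<open>\<Sum> a\<^sub>i\<^sup>2 \<le> c S \<le> \<Sum> b\<^sub>j\<^sup>2\<close>. Equality throughout would force every \<open>a\<^sub>i\<close> and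
  every \<open>b\<^sub>j\<close> to equal \<open>c\<close>, and then \<open>n c = S = (n - k) c\<close>, which is impossible.\<close>

lemma sum_power2_le_mult_sum:
  fixes f :: "'a \<Rightarrow> 'b::linordered_idom"
  assumes "\<And>x. x \<in> A \<Longrightarrow> 0 \<le> f x" and "\<And>x. x \<in> A \<Longrightarrow> f x \<le> c"
  shows "(\<Sum>x\<in>A. (f x)\<^sup>2) \<le> c * sum f A"
proof -
  have "c * sum f A - (\<Sum>x\<in>A. (f x)\<^sup>2) = (\<Sum>x\<in>A. f x * (c - f x))"
    by (simp add: sum_distrib_left sum_subtractf algebra_simps power2_eq_square)
  also have "\<dots> \<ge> 0"
    using assms by (intro sum_nonneg) simp
  finally show ?thesis by simp
qed

lemma sum_power2_eq_mult_sum_imp_eq: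
  fixes f :: "'a \<Rightarrow> 'b::linordered_idom"
  assumes "finite A" and "\<And>x. x \<in> A \<Longrightarrow> 0 < f x" and "\<And>x. x \<in> A \<Longrightarrow> f x \<le> c"
    and "(\<Sum>x\<in>A. (f x)\<^sup>2) = c * sum f A" and "x \<in> A"
  shows "f x = c"
proof -
  have "(\<Sum>x\<in>A. f x * (c - f x)) = c * sum f A - (\<Sum>x\<in>A. (f x)\<^sup>2)"
    by (simp add: sum_distrib_left sum_subtractf algebra_simps power2_eq_square)
  then have "(\<Sum>x\<in>A. f x * (c - f x)) = 0"
    using assms(4) by simp
  then have "f x * (c - f x) = 0"
    using assms by (subst (asm) sum_nonneg_eq_0_iff) (auto simp: less_imp_le)
  then show ?thesis
    using assms(2)[OF \<open>x \<in> A\<close>] by simp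
qed

lemma mult_sum_le_sum_power2:
  fixes f :: "'a \<Rightarrow> 'b::linordered_idom"
  assumes "0 \<le> c" and "\<And>x. x \<in> A \<Longrightarrow> c \<le> f x"
  shows "c * sum f A \<le> (\<Sum>x\<in>A. (f x)\<^sup>2)"
proof -
  have "(\<Sum>x\<in>A. (f x)\<^sup>2) - c * sum f A = (\<Sum>x\<in>A. f x * (f x - c))"
    by (simp add: sum_distrib_left sum_subtractf algebra_simps power2_eq_square)
  also have "\<dots> \<ge> 0"
    using assms by (intro sum_nonneg) (meson diff_ge_0_iff_ge dual_order.trans mult_nonneg_nonneg)
  finally show ?thesis by simp
qed

lemma mult_sum_eq_sum_power2_imp_eq:
  fixes f :: "'a \<Rightarrow> 'b::linordered_idom"
  assumes "finite A" and "0 \<le> c" and "\<And>x. x \<in> A \<Longrightarrow> c \<le> f x"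
    and "c * sum f A = (\<Sum>x\<in>A. (f x)\<^sup>2)" and "x \<in> A"
  shows "f x = c"
proof -
  have nonneg: "0 \<le> f y * (f y - c)" if "y \<in> A" for y
    using assms(2) assms(3)[OF that] by simp
  have "(\<Sum>x\<in>A. f x * (f x - c)) = (\<Sum>x\<in>A. (f x)\<^sup>2) - c * sum f A"
    by (simp add: sum_distrib_left sum_subtractf algebra_simps power2_eq_square)
  then have "(\<Sum>x\<in>A. f x * (f x - c)) = 0"
    using assms(4) by simp
  then have "f x * (f x - c) = 0"
    using assms(1,5) nonneg by (subst (asm) sum_nonneg_eq_0_iff) auto
  then show ?thesis
    using assms(2) assms(3)[OF \<open>x \<in> A\<close>] by auto
qed

lemma sum_power2_less_of_fewer_larger_terms:
  fixes a b :: "'a \<Rightarrow> 'b::linordered_idom"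
  assumes "finite A" and "finite B" and "A \<noteq> {}" and "card B < card A"
    and "\<And>x. x \<in> A \<Longrightarrow> 0 < a x"
    and "\<And>x y. x \<in> A \<Longrightarrow> y \<in> B \<Longrightarrow> a x \<le> b y"
    and "sum a A = sum b B"
  shows "(\<Sum>x\<in>A. (a x)\<^sup>2) < (\<Sum>y\<in>B. (b y)\<^sup>2)"
proof (rule ccontr)
  assume not_less: "\<not> ?thesis"
  define c where "c = Max (a ` A)"
  have a_le_c: "a x \<le> c" if "x \<in> A" for x
    using assms(1) that unfolding c_def by simp
  have c_le_b: "c \<le> b y" if "y \<in> B" for y
    using assms(1,3,6) that unfolding c_def by simp
  have "c \<in> a ` A"
    using assms(1,3) unfolding c_def by simp
  then have "0 < c"
    using assms(5) by auto
  have upper: "(\<Sum>x\<in>A. (a x)\<^sup>2) \<le> c * sum a A"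
    using assms(5) a_le_c by (intro sum_power2_le_mult_sum) (auto simp: less_imp_le)
  have lower: "c * sum b B \<le> (\<Sum>y\<in>B. (b y)\<^sup>2)"
    using \<open>0 < c\<close> c_le_b by (intro mult_sum_le_sum_power2) auto
  have a_eq: "(\<Sum>x\<in>A. (a x)\<^sup>2) = c * sum a A"
    and b_eq: "c * sum b B = (\<Sum>y\<in>B. (b y)\<^sup>2)"
    using upper lower not_less assms(7) by auto
  have "sum a A = of_nat (card A) * c"
    using sum_power2_eq_mult_sum_imp_eq[OF assms(1) assms(5) a_le_c a_eq] by simp
  moreover have "sum b B = of_nat (card B) * c"
    using mult_sum_eq_sum_power2_imp_eq[OF assms(2) _ c_le_b b_eq] \<open>0 < c\<close> by simp
  ultimately have "card A = card B"
    using assms(7) \<open>0 < c\<close> by simp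
  then show False
    using assms(4) by simp
qed

theorem lemma2p1:
  fixes n k :: nat and a b :: "nat \<Rightarrow> real"
  assumes "n \<ge> 2" and "1 \<le> k" and "k \<le> n - 1"
    and "\<And>i. i \<in> {1..n} \<Longrightarrow> a i > 0"
    and "\<And>j. j \<in> {1..n-k} \<Longrightarrow> b j > 0"
    and "(MAX i\<in>{1..n}. a i) \<le> (MIN j\<in>{1..n-k}. b j)"
    and "(\<Sum>i=1..n. a i) = (\<Sum>j=1..n-k. b j)"
  shows "(\<Sum>i=1..n. (a i)^2) < (\<Sum>j=1..n-k. (b j)^2)"
proof (rule sum_power2_less_of_fewer_larger_terms)
  show "a i \<le> b j" if "i \<in> {1..n}" and "j \<in> {1..n-k}" for i j
  proof -
    have "a i \<le> (MAX i\<in>{1..n}. a i)"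
      using that(1) by simp
    also have "\<dots> \<le> (MIN j\<in>{1..n-k}. b j)"
      by (fact assms(6))
    also have "\<dots> \<le> b j"
      using that(2) by simp
    finally show ?thesis .
  qed
qed (use assms in auto)

end
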